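(* In the setting below, suppose that $\tau_I = 0$ for all macrostates $I$ and that the augmented Markov kernel satisfies $$T(x,I,s;dy,J,t) = \int \eta_I(dz)\, T(z,I,\tau_I;dy,J,t)$$ for all $(x,I,s)$, $(dy,J,t)$. Then the memory kernel matrices satisfy $\mathcal K(n\tau) = 0$ for all integers $n>1$.
   Context: $X(t)$ is a Markov process on microstates partitioned into finitely many macrostates, with macroscopic time step $\tau>0$, decorrelation times $\tau_I$, and quasistationary distribution $\eta_I$ in each macrostate $I$ (i.e. $\eta_I(\cdot)=\int\eta_I(dx)\mathbb P(X(t)\in\cdot\mid X(0)=x,\ X(s)\in I,\ s\le t)$). The jump process $R(t)$ (at multiples of $\tau$) jumps from its current macrostate $I$ to $J\ne I$ at time $t$ iff $X(t-c)\in J$ for $0\le c\le\tau_J$. $C(t)$ is the consecutive time $X(t)$ has spent in its current macrostate, stopped at $\tau_J$ if $X(t)\in J$. $T(x,I,s;dy,J,t)=\mathbb P^{x,I,s}[(X(\tau),R(\tau),C(\tau))\in(dy,J,t)]$ is the one-step kernel of the augmented chain $(X,R,C)$, acting on functions by $Tf(x,I,s)=\int\sum_{J,t}T(x,I,s;dy,J,t)f(y,J,t)$. The projector $P$ is $Pf(x,I,s)=\int\eta_I(dz)f(z,I,\tau_I)$, $Q=\mathrm{Id}-P$, $\chi_J(x,I,s)=\delta_{I=J}$, and the memory kernel matrices are $\mathcal K_{IJ}(n\tau) = PT(QT)^{n-1}\chi_J(x,I,s)$ for $n\ge1$. *)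

theory Defs
  imports "HOL-Probability.Probability"
begin

text \<open>Augmented states are triples (x, I, s): microstate x, macrostate I
  (value of the jump process R), and clock value s (value of C).\<close>

definition aug_space :: "'a measure \<Rightarrow> ('a \<times> 'm \<times> real) measure" where
  "aug_space M = M \<Otimes>\<^sub>M (count_space UNIV \<Otimes>\<^sub>M borel)"

definition T_op :: "('s \<Rightarrow> 's measure) \<Rightarrow> ('s \<Rightarrow> real) \<Rightarrow> 's \<Rightarrow> real" where
  "T_op T f w = (\<integral>w'. f w' \<partial>(T w))"

definition P_op :: "('m \<Rightarrow> 'a measure) \<Rightarrow> ('m \<Rightarrow> real)
    \<Rightarrow> ('a \<times> 'm \<times> real \<Rightarrow> real) \<Rightarrow> 'a \<times> 'm \<times> real \<Rightarrow> real" where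
  "P_op \<eta> \<tau>c f w = (case w of (x, I, s) \<Rightarrow> \<integral>z. f (z, I, \<tau>c I) \<partial>(\<eta> I))"

definition Q_op :: "('m \<Rightarrow> 'a measure) \<Rightarrow> ('m \<Rightarrow> real)
    \<Rightarrow> ('a \<times> 'm \<times> real \<Rightarrow> real) \<Rightarrow> 'a \<times> 'm \<times> real \<Rightarrow> real" where
  "Q_op \<eta> \<tau>c f w = f w - P_op \<eta> \<tau>c f w"

definition chi :: "'m \<Rightarrow> 'a \<times> 'm \<times> real \<Rightarrow> real" where
  "chi J w = (case w of (x, I, s) \<Rightarrow> (if I = J then 1 else 0))"

text \<open>Memory kernel: K_{IJ}(n tau) = (P T (Q T)^(n-1) chi_J)(x,I,s) (for n \<ge> 1);
  the value does not depend on x, s.\<close>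
definition mem_kernel :: "('a \<times> 'm \<times> real \<Rightarrow> ('a \<times> 'm \<times> real) measure)
    \<Rightarrow> ('m \<Rightarrow> 'a measure) \<Rightarrow> ('m \<Rightarrow> real) \<Rightarrow> nat \<Rightarrow> 'm \<Rightarrow> 'a \<times> 'm \<times> real \<Rightarrow> real" where
  "mem_kernel T \<eta> \<tau>c n J =
     P_op \<eta> \<tau>c (T_op T (((\<lambda>f. Q_op \<eta> \<tau>c (T_op T f)) ^^ (n - 1)) (chi J)))"

end

theory Submission
  imports Defs
begin

text \<open>The hypothesis on T says that one step of the augmented chain from (x, I, s) is
  the eta_I-mixture of the steps from (z, I, tau_I); integrating a bounded measurable f
  against both sides gives T f = P T f, i.e. Q T f = 0. Starting from the bounded
  measurable function chi_J, the iterate (Q T)^(n-1) chi_J therefore vanishes as soon as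
  n > 1, and so does P T applied to it.\<close>

lemma space_aug_space: "space (aug_space M) = space M \<times> UNIV"
  by (simp add: aug_space_def space_pair_measure)

lemma macrostate_function_measurable:
  "(\<lambda>w. g (fst (snd w)) :: real) \<in> borel_measurable (aug_space M)"
proof (rule measurable_compose[where f = "\<lambda>w. fst (snd w)"])
  show "(\<lambda>w. fst (snd w)) \<in> aug_space M \<rightarrow>\<^sub>M count_space UNIV"
    unfolding aug_space_def by measurable
qed simp

lemma chi_measurable: "chi J \<in> borel_measurable (aug_space M)"
proof -
  have eq: "chi J = (\<lambda>w. if fst (snd w) = J then 1 else 0)"
    by (auto simp: chi_def fun_eq_iff)
  show ?thesis
    unfolding eq by (rule macrostate_function_measurable)
qed

lemma P_op_measurable: "P_op \<eta> \<tau>c f \<in> borel_measurable (aug_space M)"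
proof -
  have eq: "P_op \<eta> \<tau>c f = (\<lambda>w. \<integral>z. f (z, fst (snd w), \<tau>c (fst (snd w))) \<partial>\<eta> (fst (snd w)))"
    by (auto simp: P_op_def fun_eq_iff)
  show ?thesis
    unfolding eq by (rule macrostate_function_measurable)
qed

lemma T_op_measurable:
  assumes "T \<in> A \<rightarrow>\<^sub>M subprob_algebra A" and "f \<in> borel_measurable A"
  shows "T_op T f \<in> borel_measurable A"
  using measurable_compose[OF assms(1) integral_measurable_subprob_algebra[OF assms(2)]]
  by (simp add: T_op_def[abs_def] comp_def)

lemma T_op_vanishing:
  assumes "T \<in> A \<rightarrow>\<^sub>M subprob_algebra A" and "w \<in> space A"
    and "\<And>v. v \<in> space A \<Longrightarrow> f v = 0"
  shows "T_op T f w = 0"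
proof -
  have "sets (T w) = sets A"
    using measurable_space[OF assms(1,2)] by (simp add: space_subprob_algebra)
  then have "space (T w) = space A"
    by (rule sets_eq_imp_space_eq)
  then have "(\<integral>v. f v \<partial>T w) = (\<integral>v. 0 \<partial>T w)"
    using assms(3) by (intro Bochner_Integration.integral_cong) auto
  then show ?thesis
    by (simp add: T_op_def)
qed

locale eta_averaged_kernel =
  fixes M :: "'a measure"
    and T :: "'a \<times> 'm \<times> real \<Rightarrow> ('a \<times> 'm \<times> real) measure"
    and \<eta> :: "'m \<Rightarrow> 'a measure"
    and \<tau>c :: "'m \<Rightarrow> real"
  assumes T_kernel: "T \<in> aug_space M \<rightarrow>\<^sub>M prob_algebra (aug_space M)"
    and eta_prob: "prob_space (\<eta> I)"
    and eta_sets: "sets (\<eta> I) = sets M"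
    and T_eta: "x \<in> space M \<Longrightarrow> A \<in> sets (aug_space M) \<Longrightarrow>
        emeasure (T (x, I, s)) A = (\<integral>\<^sup>+ z. emeasure (T (z, I, \<tau>c I)) A \<partial>\<eta> I)"
begin

abbreviation QT :: "('a \<times> 'm \<times> real \<Rightarrow> real) \<Rightarrow> 'a \<times> 'm \<times> real \<Rightarrow> real" where
  "QT \<equiv> \<lambda>f. Q_op \<eta> \<tau>c (T_op T f)"

lemma T_subprob_kernel: "T \<in> aug_space M \<rightarrow>\<^sub>M subprob_algebra (aug_space M)"
  using T_kernel by (rule measurable_prob_algebraD)

lemma sets_T: "w \<in> space (aug_space M) \<Longrightarrow> sets (T w) = sets (aug_space M)"
  using measurable_space[OF T_kernel] by (simp add: space_prob_algebra)

lemma T_restart_kernel: "(\<lambda>z. T (z, I, \<tau>c I)) \<in> \<eta> I \<rightarrow>\<^sub>M subprob_algebra (aug_space M)"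
proof -
  have "(\<lambda>z. (z, I, \<tau>c I)) \<in> \<eta> I \<rightarrow>\<^sub>M aug_space M"
    unfolding aug_space_def measurable_cong_sets[OF eta_sets refl] by measurable
  from measurable_compose[OF this T_subprob_kernel] show ?thesis
    by (simp add: comp_def)
qed

lemma T_eq_bind_eta:
  assumes "x \<in> space M"
  shows "T (x, I, s) = \<eta> I \<bind> (\<lambda>z. T (z, I, \<tau>c I))"
proof (rule measure_eqI)
  have "space (\<eta> I) \<noteq> {}"
    using eta_prob prob_space.not_empty by blast
  moreover have "sets (T (z, I, \<tau>c I)) = sets (aug_space M)" if "z \<in> space (\<eta> I)" for z
    using that sets_eq_imp_space_eq[OF eta_sets] by (intro sets_T) (simp add: space_aug_space)
  moreover have xs: "(x, I, s) \<in> space (aug_space M)"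
    using assms by (simp add: space_aug_space)
  ultimately show "sets (T (x, I, s)) = sets (\<eta> I \<bind> (\<lambda>z. T (z, I, \<tau>c I)))"
    by (simp add: sets_T sets_bind)
  fix A
  assume "A \<in> sets (T (x, I, s))"
  then have "A \<in> sets (aug_space M)"
    using sets_T[OF xs] by simp
  then show "emeasure (T (x, I, s)) A = emeasure (\<eta> I \<bind> (\<lambda>z. T (z, I, \<tau>c I))) A"
    using emeasure_bind[OF \<open>space (\<eta> I) \<noteq> {}\<close> T_restart_kernel] T_eta[OF assms] by simp
qed

lemma T_op_eq_P_op_T_op:
  assumes f: "f \<in> borel_measurable (aug_space M)"
    and f_bounded: "\<And>w. w \<in> space (aug_space M) \<Longrightarrow> \<bar>f w\<bar> \<le> B"
    and x: "x \<in> space M"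
  shows "T_op T f (x, I, s) = P_op \<eta> \<tau>c (T_op T f) (x, I, s)"
proof -
  have "T_op T f (x, I, s) = (\<integral>v. f v \<partial>(\<eta> I \<bind> (\<lambda>z. T (z, I, \<tau>c I))))"
    by (simp add: T_op_def T_eq_bind_eta[OF x])
  also have "\<dots> = (\<integral>z. (\<integral>v. f v \<partial>T (z, I, \<tau>c I)) \<partial>\<eta> I)"
  proof (rule integral_bind[OF f f_bounded T_restart_kernel])
    show "finite_measure (\<eta> I)"
      using eta_prob by (simp add: prob_space_def)
    show "AE z in \<eta> I. emeasure (T (z, I, \<tau>c I)) (space (T (z, I, \<tau>c I))) \<le> ennreal 1"
      using measurable_space[OF T_restart_kernel]
      by (intro AE_I2) (auto simp: space_subprob_algebra subprob_space.emeasure_space_le_1)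
  qed
  finally show ?thesis
    by (simp add: P_op_def T_op_def)
qed

lemma QT_measurable:
  assumes "f \<in> borel_measurable (aug_space M)"
  shows "QT f \<in> borel_measurable (aug_space M)"
  unfolding Q_op_def[abs_def]
  by (intro borel_measurable_diff T_op_measurable[OF T_subprob_kernel assms] P_op_measurable)

lemma QT_vanishes:
  assumes "f \<in> borel_measurable (aug_space M)"
    and "\<And>w. w \<in> space (aug_space M) \<Longrightarrow> \<bar>f w\<bar> \<le> B"
    and "w \<in> space (aug_space M)"
  shows "QT f w = 0"
proof -
  obtain x I s where w: "w = (x, I, s)" and "x \<in> space M"
    using assms(3) by (cases w) (auto simp: space_aug_space)
  then show ?thesis
    using T_op_eq_P_op_T_op[OF assms(1,2)] by (simp add: Q_op_def)
qed

lemma QT_iterate_chi_bounded_measurable: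
  "(QT ^^ m) (chi J) \<in> borel_measurable (aug_space M) \<and>
    (\<exists>B. \<forall>w\<in>space (aug_space M). \<bar>(QT ^^ m) (chi J) w\<bar> \<le> B)"
proof (induction m)
  case 0
  have "\<bar>chi J w\<bar> \<le> 1" for w
    by (auto simp: chi_def split: prod.splits)
  then show ?case
    using chi_measurable by (auto intro!: exI[of _ 1])
next
  case (Suc m)
  then obtain B where measurable: "(QT ^^ m) (chi J) \<in> borel_measurable (aug_space M)"
    and "\<And>w. w \<in> space (aug_space M) \<Longrightarrow> \<bar>(QT ^^ m) (chi J) w\<bar> \<le> B"
    by blast
  then have "QT ((QT ^^ m) (chi J)) w = 0" if "w \<in> space (aug_space M)" for w
    using QT_vanishes that by blast
  with measurable show ?case
    by (auto intro!: QT_measurable exI[of _ 0])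
qed

lemma QT_iterate_chi_vanishes:
  assumes "w \<in> space (aug_space M)"
  shows "(QT ^^ Suc m) (chi J) w = 0"
  using QT_iterate_chi_bounded_measurable[of m J] QT_vanishes[OF _ _ assms] by auto

lemma mem_kernel_vanishes:
  assumes "n > 1" and "x \<in> space M"
  shows "mem_kernel T \<eta> \<tau>c n J (x, I, s) = 0"
proof -
  obtain m where m: "n - 1 = Suc m"
    using assms(1) by (metis Suc_diff_Suc zero_less_diff)
  have "T_op T ((QT ^^ Suc m) (chi J)) (z, I, \<tau>c I) = 0" if "z \<in> space M" for z
    using that by (intro T_op_vanishing[OF T_subprob_kernel] QT_iterate_chi_vanishes)
      (auto simp: space_aug_space)
  then have "(\<integral>z. T_op T ((QT ^^ Suc m) (chi J)) (z, I, \<tau>c I) \<partial>\<eta> I) = (\<integral>z. 0 \<partial>\<eta> I)"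
    using sets_eq_imp_space_eq[OF eta_sets] by (intro Bochner_Integration.integral_cong) auto
  then show ?thesis
    unfolding mem_kernel_def m by (simp add: P_op_def)
qed

end

theorem theorem3:
  fixes M :: "'a measure"
    and T :: "'a \<times> ('m::finite) \<times> real \<Rightarrow> ('a \<times> 'm \<times> real) measure"
    and \<eta> :: "'m \<Rightarrow> 'a measure"
    and \<tau>c :: "'m \<Rightarrow> real"
  assumes T_kernel: "T \<in> measurable (aug_space M) (prob_algebra (aug_space M))"
    and eta_prob: "\<And>I. prob_space (\<eta> I)"
    and eta_sets: "\<And>I. sets (\<eta> I) = sets M"
    and tau_zero: "\<And>I. \<tau>c I = 0"
    and T_eta: "\<And>x I s A. x \<in> space M \<Longrightarrow> A \<in> sets (aug_space M) \<Longrightarrow>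
        emeasure (T (x, I, s)) A = (\<integral>\<^sup>+ z. emeasure (T (z, I, \<tau>c I)) A \<partial>(\<eta> I))"
    and n_gt: "n > (1::nat)"
  shows "\<forall>I J. \<forall>x\<in>space M. \<forall>s. mem_kernel T \<eta> \<tau>c n J (x, I, s) = 0"
proof -
  interpret eta_averaged_kernel M T \<eta> \<tau>c
    by (rule eta_averaged_kernel.intro) (fact T_kernel eta_prob eta_sets T_eta)+
  show ?thesis
    using mem_kernel_vanishes[OF n_gt] by blast
qed

end
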